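(* Let $G=AB$ be a finite $\pi$-separable group that is the product of subgroups $A$ and $B$, and suppose $G=AB$ is a core-factorisation. Let $H$ be a Hall $\pi$-subgroup of $G$ such that $H=(H\cap A)(H\cap B)$, with $H\cap A$ a Hall $\pi$-subgroup of $A$ and $H\cap B$ a Hall $\pi$-subgroup of $B$ (such an $H$ always exists). Then, if $H\neq 1$, $H=(H\cap A)(H\cap B)$ is also a core-factorisation.
   Context: $\pi$ is a set of primes. A subgroup $U$ of $G$ covers a section $V/W$ ($W\trianglelefteq V\le G$) if $W(U\cap V)=V$. If $1\neq G=AB$ is a product of subgroups $A$ and $B$, then $G=AB$ is called a core-factorisation if $G$ possesses a chief series each of whose chief factors is covered by $A$ or by $B$. *)

theory Defs
  imports "HOL-Algebra.Algebra"
begin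

definition pi_number :: "nat set \<Rightarrow> nat \<Rightarrow> bool" where
  "pi_number \<pi> n \<longleftrightarrow> (\<forall>p. Factorial_Ring.prime p \<and> p dvd n \<longrightarrow> p \<in> \<pi>)"

definition pi'_number :: "nat set \<Rightarrow> nat \<Rightarrow> bool" where
  "pi'_number \<pi> n \<longleftrightarrow> (\<forall>p. Factorial_Ring.prime p \<and> p dvd n \<longrightarrow> p \<notin> \<pi>)"

definition hall_subgroup :: "nat set \<Rightarrow> ('a, 'b) monoid_scheme \<Rightarrow> 'a set \<Rightarrow> bool" where
  "hall_subgroup \<pi> G H \<longleftrightarrow> subgroup H G \<and> pi_number \<pi> (card H)
      \<and> pi'_number \<pi> (card (carrier G) div card H)"

definition pi_separable :: "nat set \<Rightarrow> ('a, 'b) monoid_scheme \<Rightarrow> bool" where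
  "pi_separable \<pi> G \<longleftrightarrow> (\<exists>n s. s 0 = {\<one>\<^bsub>G\<^esub>} \<and> s n = carrier G \<and>
      (\<forall>i\<le>n. s i \<lhd> G) \<and>
      (\<forall>i<n. s i \<subseteq> s (Suc i) \<and>
         (pi_number \<pi> (card (s (Suc i)) div card (s i)) \<or>
          pi'_number \<pi> (card (s (Suc i)) div card (s i)))))"

definition chief_series :: "('a, 'b) monoid_scheme \<Rightarrow> nat \<Rightarrow> (nat \<Rightarrow> 'a set) \<Rightarrow> bool" where
  "chief_series G n s \<longleftrightarrow> s 0 = {\<one>\<^bsub>G\<^esub>} \<and> s n = carrier G \<and>
      (\<forall>i\<le>n. s i \<lhd> G) \<and>
      (\<forall>i<n. s i \<subset> s (Suc i) \<and>
         \<not> (\<exists>N. N \<lhd> G \<and> s i \<subset> N \<and> N \<subset> s (Suc i)))"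

definition covers :: "('a, 'b) monoid_scheme \<Rightarrow> 'a set \<Rightarrow> 'a set \<Rightarrow> 'a set \<Rightarrow> bool" where
  "covers G U V W \<longleftrightarrow> W <#>\<^bsub>G\<^esub> (U \<inter> V) = V"

definition core_factorisation :: "('a, 'b) monoid_scheme \<Rightarrow> 'a set \<Rightarrow> 'a set \<Rightarrow> bool" where
  "core_factorisation G A B \<longleftrightarrow> carrier G \<noteq> {\<one>\<^bsub>G\<^esub>} \<and> subgroup A G \<and> subgroup B G \<and>
      A <#>\<^bsub>G\<^esub> B = carrier G \<and>
      (\<exists>n s. chief_series G n s \<and>
         (\<forall>i<n. covers G A (s (Suc i)) (s i) \<or> covers G B (s (Suc i)) (s i)))"

end

theory Submission
  imports Defs
begin

text \<open>
  Let Q/P be a chief factor of G covered by A, so that |Q : P| = |A \<inter> Q : A \<inter> P|.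
  A Hall pi-subgroup meets every normal subgroup in a Hall pi-subgroup of it; hence H \<inter> Q and
  H \<inter> P are Hall in Q and P, and, H \<inter> A being Hall in A, the groups H \<inter> A \<inter> Q and
  H \<inter> A \<inter> P are Hall in A \<inter> Q and A \<inter> P. Comparing pi-parts of the index identity
  gives |H \<inter> Q : H \<inter> P| = |H \<inter> A \<inter> Q : H \<inter> A \<inter> P|, i.e. H \<inter> A covers
  (H \<inter> Q)/(H \<inter> P), and then also every section of H between H \<inter> P and H \<inter> Q.
  So any chief series of H refining the normal series (H \<inter> s i) of H, for a chief series s of
  G witnessing the core-factorisation, has all its factors covered by H \<inter> A or by H \<inter> B.
\<close>

lemma pi_number_mult: "pi_number \<pi> a \<Longrightarrow> pi_number \<pi> b \<Longrightarrow> pi_number \<pi> (a * b)"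
  unfolding pi_number_def by (metis prime_dvd_mult_iff)

lemma pi'_number_mult: "pi'_number \<pi> a \<Longrightarrow> pi'_number \<pi> b \<Longrightarrow> pi'_number \<pi> (a * b)"
  unfolding pi'_number_def by (metis prime_dvd_mult_iff)

lemma pi_number_dvd: "pi_number \<pi> b \<Longrightarrow> a dvd b \<Longrightarrow> pi_number \<pi> a"
  unfolding pi_number_def by (meson dvd_trans)

lemma pi'_number_dvd: "pi'_number \<pi> b \<Longrightarrow> a dvd b \<Longrightarrow> pi'_number \<pi> a"
  unfolding pi'_number_def by (meson dvd_trans)

lemma coprime_pi_pi'_number:
  assumes "pi_number \<pi> a" and "pi'_number \<pi> b"
  shows "coprime a b"
proof (rule ccontr)
  assume "\<not> coprime a b"
  then obtain p :: nat where "Factorial_Ring.prime p" "p dvd a" "p dvd b"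
    by (metis coprime_iff_gcd_eq_1 gcd_dvd1 gcd_dvd2 dvd_trans prime_factor_nat)
  then show False using assms unfolding pi_number_def pi'_number_def by blast
qed

lemma pi_part_unique:
  fixes a b c d :: nat
  assumes "a * c = b * d" and "pi_number \<pi> a" "pi_number \<pi> b" and "pi'_number \<pi> c" "pi'_number \<pi> d"
  shows "a = b"
proof (rule dvd_antisym)
  show "a dvd b"
    using coprime_dvd_mult_left_iff[OF coprime_pi_pi'_number[OF assms(2,5)]] assms(1)
    by (metis dvd_triv_left)
  show "b dvd a"
    using coprime_dvd_mult_left_iff[OF coprime_pi_pi'_number[OF assms(3,4)]] assms(1)
    by (metis dvd_triv_left)
qed

lemma set_mult_carrier_update: "S <#>\<^bsub>G\<lparr>carrier := H\<rparr>\<^esub> T = S <#>\<^bsub>G\<^esub> T"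
  by (simp add: set_mult_def)

lemma covers_carrier_update: "covers (G\<lparr>carrier := H\<rparr>) = covers G"
  by (simp add: covers_def fun_eq_iff set_mult_carrier_update)

lemma (in group) card_subgroup_dvd:
  assumes "subgroup S G" "subgroup T G" "S \<subseteq> T"
  shows "card S dvd card T"
proof -
  interpret T: group "G\<lparr>carrier := T\<rparr>" using assms(2) by (rule subgroup_imp_group)
  have "card (rcosets\<^bsub>G\<lparr>carrier := T\<rparr>\<^esub> S) * card S = card T"
    using T.lagrange[OF subgroup_incl[OF assms]] by (simp add: order_def)
  then show ?thesis by (metis dvd_triv_right)
qed

lemma (in group) bij_betw_Int_set_mult_fibre:
  assumes S: "subgroup S G" and T: "subgroup T G" and x: "x \<in> S" and y: "y \<in> T"
  shows "bij_betw (\<lambda>t. (x \<otimes> t, inv t \<otimes> y)) (S \<inter> T) {p \<in> S \<times> T. fst p \<otimes> snd p = x \<otimes> y}"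
proof -
  have xG: "x \<in> carrier G" and yG: "y \<in> carrier G"
    using subgroup.mem_carrier[OF S x] subgroup.mem_carrier[OF T y] .
  show ?thesis
  proof (rule bij_betwI')
    fix t t' assume "t \<in> S \<inter> T" "t' \<in> S \<inter> T"
    then have "t \<in> carrier G" "t' \<in> carrier G" using subgroup.mem_carrier[OF S] by auto
    then show "((x \<otimes> t, inv t \<otimes> y) = (x \<otimes> t', inv t' \<otimes> y)) = (t = t')"
      using xG l_cancel[of x t t'] by (metis Pair_inject)
  next
    fix t assume t: "t \<in> S \<inter> T"
    then have "t \<in> carrier G" using subgroup.mem_carrier[OF S] by blast
    then have "x \<otimes> t \<otimes> (inv t \<otimes> y) = x \<otimes> y"
      using xG yG by (simp add: m_assoc) (simp add: m_assoc[symmetric])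
    then show "(x \<otimes> t, inv t \<otimes> y) \<in> {p \<in> S \<times> T. fst p \<otimes> snd p = x \<otimes> y}"
      using t x y S T by (auto intro: subgroup.m_closed subgroup.m_inv_closed)
  next
    fix p assume "p \<in> {p \<in> S \<times> T. fst p \<otimes> snd p = x \<otimes> y}"
    then obtain a b where ab: "p = (a, b)" "a \<in> S" "b \<in> T" "a \<otimes> b = x \<otimes> y" by auto
    have aG: "a \<in> carrier G" and bG: "b \<in> carrier G"
      using subgroup.mem_carrier[OF S ab(2)] subgroup.mem_carrier[OF T ab(3)] .
    define t where "t = inv x \<otimes> a"
    have "inv x \<otimes> (a \<otimes> b) \<otimes> inv b = inv x \<otimes> (x \<otimes> y) \<otimes> inv b" using ab by simp
    then have "t = y \<otimes> inv b"
      unfolding t_def using aG bG xG yG by (simp add: m_assoc) (simp add: m_assoc[symmetric])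
    then have "t \<in> T" using T y ab by (auto intro: subgroup.m_closed subgroup.m_inv_closed)
    moreover have "t \<in> S" unfolding t_def using S x ab by (auto intro: subgroup.m_closed subgroup.m_inv_closed)
    moreover have "x \<otimes> t = a" unfolding t_def using xG aG by (simp add: m_assoc[symmetric])
    moreover have "inv t \<otimes> y = b"
    proof -
      have "inv t \<otimes> y = inv a \<otimes> x \<otimes> y" unfolding t_def using xG aG by (simp add: inv_mult_group)
      also have "\<dots> = inv a \<otimes> (a \<otimes> b)" using ab xG yG aG by (simp add: m_assoc)
      also have "\<dots> = b" using aG bG by (simp add: m_assoc[symmetric])
      finally show ?thesis .
    qed
    ultimately show "\<exists>t\<in>S \<inter> T. p = (x \<otimes> t, inv t \<otimes> y)" using ab(1) by auto
  qed
qed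

lemma (in group) card_set_mult_Int:
  assumes S: "subgroup S G" and T: "subgroup T G" and "finite S" "finite T"
  shows "card (S <#> T) * card (S \<inter> T) = card S * card T"
proof -
  define fibre where "fibre z = {p \<in> S \<times> T. fst p \<otimes> snd p = z}" for z
  have fin: "finite (S <#> T)"
    unfolding set_mult_def using assms by simp
  have partition: "S \<times> T = (\<Union>z\<in>S <#> T. fibre z)"
    unfolding fibre_def set_mult_def by fastforce
  have fibre_card: "card (fibre z) = card (S \<inter> T)" if z: "z \<in> S <#> T" for z
  proof -
    obtain x y where x: "x \<in> S" and y: "y \<in> T" and "z = x \<otimes> y"
      using z unfolding set_mult_def by blast
    then show ?thesis
      using bij_betw_same_card[OF bij_betw_Int_set_mult_fibre[OF S T x y]] by (simp add: fibre_def)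
  qed
  have "card S * card T = card (S \<times> T)" by (simp add: card_cartesian_product)
  also have "\<dots> = (\<Sum>z\<in>S <#> T. card (fibre z))" unfolding partition
  proof (rule card_UN_disjoint[OF fin])
    show "\<forall>z\<in>S <#> T. finite (fibre z)" unfolding fibre_def using assms by simp
    show "\<forall>z\<in>S <#> T. \<forall>z'\<in>S <#> T. z \<noteq> z' \<longrightarrow> fibre z \<inter> fibre z' = {}"
      unfolding fibre_def by blast
  qed
  also have "\<dots> = card (S <#> T) * card (S \<inter> T)" using fibre_card by simp
  finally show ?thesis by simp
qed

lemma (in group) hall_Int_normal_splits_card:
  assumes fin: "finite (carrier G)" and hall: "hall_subgroup \<pi> G H" and K: "K \<lhd> G"
  shows "\<exists>c. card K = card (H \<inter> K) * c \<and> pi_number \<pi> (card (H \<inter> K)) \<and> pi'_number \<pi> c"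
proof -
  have H: "subgroup H G" and pi_H: "pi_number \<pi> (card H)"
    and pi'_index: "pi'_number \<pi> (card (carrier G) div card H)"
    using hall unfolding hall_subgroup_def by auto
  have Ks: "subgroup K G" using K by (rule normal_imp_subgroup)
  have finite_sub: "finite S" if "subgroup S G" for S
    using finite_subset[OF subgroup.subset[OF that] fin] .
  have KH: "subgroup (K <#> H) G" using mult_norm_subgroup[OF K H] .
  have "H \<subseteq> K <#> H" using subgroup.subset[OF subgroup_of_normal_set_mult[OF K H]] by simp
  then obtain m where m: "card (K <#> H) = card H * m"
    using card_subgroup_dvd[OF H KH] by blast
  obtain e where "card (carrier G) = card (K <#> H) * e"
    using card_subgroup_dvd[OF KH subgroup_self subgroup.subset[OF KH]] by blast
  moreover have "card H > 0" using finite_sub[OF H] subgroup.one_closed[OF H] card_gt_0_iff by blast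
  ultimately have "card (carrier G) div card H = m * e" using m by simp
  then have pi'_m: "pi'_number \<pi> m" using pi'_index pi'_number_dvd by (metis dvd_triv_left)
  have "card (K <#> H) * card (K \<inter> H) = card K * card H"
    using card_set_mult_Int[OF Ks H finite_sub[OF Ks] finite_sub[OF H]] .
  then have "card K = card (H \<inter> K) * m"
    using m \<open>card H > 0\<close> by (simp add: Int_commute mult.commute mult.left_commute)
  moreover have "pi_number \<pi> (card (H \<inter> K))"
    using card_subgroup_dvd[OF subgroups_Inter_pair[OF H Ks] H] pi_H pi_number_dvd by blast
  ultimately show ?thesis using pi'_m by blast
qed

lemma (in group) covers_iff_card_eq:
  assumes U: "subgroup U G" and P: "subgroup P G" and Q: "subgroup Q G"
    and PQ: "P \<subseteq> Q" and fin: "finite Q"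
  shows "covers G U Q P \<longleftrightarrow> card Q * card (U \<inter> P) = card P * card (U \<inter> Q)"
proof -
  have UQ: "subgroup (U \<inter> Q) G" using subgroups_Inter_pair[OF U Q] .
  have "card (P <#> (U \<inter> Q)) * card (P \<inter> (U \<inter> Q)) = card P * card (U \<inter> Q)"
    using card_set_mult_Int[OF P UQ] fin PQ finite_subset by blast
  moreover have "P \<inter> (U \<inter> Q) = U \<inter> P" using PQ by blast
  ultimately have prod: "card (P <#> (U \<inter> Q)) * card (U \<inter> P) = card P * card (U \<inter> Q)"
    by simp
  have "P <#> (U \<inter> Q) \<subseteq> Q <#> Q" using PQ by (intro mono_set_mult) auto
  then have sub: "P <#> (U \<inter> Q) \<subseteq> Q" using subgroup_mult_id[OF Q] by simp
  have "card (U \<inter> P) \<noteq> 0"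
    using subgroup.one_closed[OF subgroups_Inter_pair[OF U P]] fin PQ
    by (metis card_0_eq empty_iff finite_subset inf_le2 subset_trans)
  then have "card Q * card (U \<inter> P) = card P * card (U \<inter> Q) \<longleftrightarrow> card (P <#> (U \<inter> Q)) = card Q"
    unfolding prod[symmetric] by (metis mult_right_cancel)
  also have "\<dots> \<longleftrightarrow> covers G U Q P"
    unfolding covers_def using sub card_subset_eq[OF fin sub] by auto
  finally show ?thesis by (rule sym)
qed

lemma (in group) hall_Int_covers:
  assumes fin: "finite (carrier G)" and hall: "hall_subgroup \<pi> G H"
    and A: "subgroup A G" and hall_A: "hall_subgroup \<pi> (G\<lparr>carrier := A\<rparr>) (H \<inter> A)"
    and P: "P \<lhd> G" and Q: "Q \<lhd> G" and PQ: "P \<subseteq> Q" and cov: "covers G A Q P"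
  shows "covers G (H \<inter> A) (H \<inter> Q) (H \<inter> P)"
proof -
  interpret GA: group "G\<lparr>carrier := A\<rparr>" using A by (rule subgroup_imp_group)
  have H: "subgroup H G" using hall unfolding hall_subgroup_def by blast
  have Ps: "subgroup P G" and Qs: "subgroup Q G" using P Q normal_imp_subgroup by auto
  have finite_sub: "finite S" if "subgroup S G" for S
    using finite_subset[OF subgroup.subset[OF that] fin] .
  have fin_A: "finite (carrier (G\<lparr>carrier := A\<rparr>))" using finite_sub[OF A] by simp
  obtain q where q: "card Q = card (H \<inter> Q) * q" "pi_number \<pi> (card (H \<inter> Q))" "pi'_number \<pi> q"
    using hall_Int_normal_splits_card[OF fin hall Q] by blast
  obtain p where p: "card P = card (H \<inter> P) * p" "pi_number \<pi> (card (H \<inter> P))" "pi'_number \<pi> p"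
    using hall_Int_normal_splits_card[OF fin hall P] by blast
  obtain q' where q': "card (Q \<inter> A) = card (H \<inter> A \<inter> Q) * q'"
    "pi_number \<pi> (card (H \<inter> A \<inter> Q))" "pi'_number \<pi> q'"
    using GA.hall_Int_normal_splits_card[OF fin_A hall_A normal_Int_subgroup[OF A Q]]
    by (auto simp: Int_ac)
  obtain p' where p': "card (P \<inter> A) = card (H \<inter> A \<inter> P) * p'"
    "pi_number \<pi> (card (H \<inter> A \<inter> P))" "pi'_number \<pi> p'"
    using GA.hall_Int_normal_splits_card[OF fin_A hall_A normal_Int_subgroup[OF A P]]
    by (auto simp: Int_ac)
  have "card Q * card (A \<inter> P) = card P * card (A \<inter> Q)"
    using cov covers_iff_card_eq[OF A Ps Qs PQ finite_sub[OF Qs]] by blast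
  then have "(card (H \<inter> Q) * card (H \<inter> A \<inter> P)) * (q * p') = (card (H \<inter> P) * card (H \<inter> A \<inter> Q)) * (p * q')"
    using p q p' q' by (simp add: Int_commute ac_simps)
  then have "card (H \<inter> Q) * card (H \<inter> A \<inter> P) = card (H \<inter> P) * card (H \<inter> A \<inter> Q)"
    by (rule pi_part_unique) (use p q p' q' in \<open>auto intro: pi_number_mult pi'_number_mult\<close>)
  moreover have "(H \<inter> A) \<inter> (H \<inter> P) = H \<inter> A \<inter> P" "(H \<inter> A) \<inter> (H \<inter> Q) = H \<inter> A \<inter> Q" by auto
  moreover have "subgroup (H \<inter> A) G" "subgroup (H \<inter> P) G" "subgroup (H \<inter> Q) G"
    using H A Ps Qs by (auto intro: subgroups_Inter_pair)
  ultimately show ?thesis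
    using covers_iff_card_eq[of "H \<inter> A" "H \<inter> P" "H \<inter> Q"] PQ finite_sub by auto
qed

lemma (in group) covers_subsection:
  assumes cov: "covers G U Q P" and M': "subgroup M' G"
    and "P \<subseteq> M" "M \<subseteq> M'" "M' \<subseteq> Q" and "U \<subseteq> carrier G"
  shows "covers G U M' M"
  unfolding covers_def
proof
  have "M <#> (U \<inter> M') \<subseteq> M' <#> M'" using assms by (intro mono_set_mult) auto
  then show "M <#> (U \<inter> M') \<subseteq> M'" using subgroup_mult_id[OF M'] by simp
next
  show "M' \<subseteq> M <#> (U \<inter> M')"
  proof
    fix z assume z: "z \<in> M'"
    then have "z \<in> P <#> (U \<inter> Q)" using cov assms unfolding covers_def by blast
    then obtain x y where x: "x \<in> P" and y: "y \<in> U \<inter> Q" and "z = x \<otimes> y"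
      unfolding set_mult_def by blast
    moreover have xM': "x \<in> M'" using x assms by blast
    moreover have "x \<in> carrier G" "y \<in> carrier G" using xM' y M' assms subgroup.mem_carrier by auto
    ultimately have "y = inv x \<otimes> z" by (simp add: m_assoc[symmetric])
    then have "y \<in> M'" using xM' z M' by (simp add: subgroup.m_closed subgroup.m_inv_closed)
    then show "z \<in> M <#> (U \<inter> M')"
      unfolding set_mult_def using x y \<open>z = x \<otimes> y\<close> assms by blast
  qed
qed

definition covered_chief_chain :: "('a, 'b) monoid_scheme \<Rightarrow> 'a set \<Rightarrow> 'a set \<Rightarrow> 'a set \<Rightarrow> bool" where
  "covered_chief_chain K U V W \<longleftrightarrow> (\<exists>n s. s 0 = {\<one>\<^bsub>K\<^esub>} \<and> s n = W \<and> (\<forall>i\<le>n. s i \<lhd> K) \<and>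
     (\<forall>i<n. s i \<subset> s (Suc i) \<and> \<not> (\<exists>N. N \<lhd> K \<and> s i \<subset> N \<and> N \<subset> s (Suc i))) \<and>
     (\<forall>i<n. covers K U (s (Suc i)) (s i) \<or> covers K V (s (Suc i)) (s i)))"

lemma covered_chief_chain_carrier_iff:
  "covered_chief_chain K U V (carrier K) \<longleftrightarrow> (\<exists>n s. chief_series K n s \<and>
     (\<forall>i<n. covers K U (s (Suc i)) (s i) \<or> covers K V (s (Suc i)) (s i)))"
  unfolding covered_chief_chain_def chief_series_def by simp

lemma covered_chief_chain_trivial: "group K \<Longrightarrow> covered_chief_chain K U V {\<one>\<^bsub>K\<^esub>}"
  unfolding covered_chief_chain_def
  by (rule exI[of _ 0], rule exI[of _ "\<lambda>_. {\<one>\<^bsub>K\<^esub>}"]) (simp add: group.one_is_normal)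

lemma covered_chief_chain_snoc:
  assumes chain: "covered_chief_chain K U V W" and N: "N \<lhd> K" "W \<subset> N"
    and chief: "\<not> (\<exists>N'. N' \<lhd> K \<and> W \<subset> N' \<and> N' \<subset> N)"
    and cov: "covers K U N W \<or> covers K V N W"
  shows "covered_chief_chain K U V N"
proof -
  obtain n s where s: "s 0 = {\<one>\<^bsub>K\<^esub>}" "s n = W" "\<forall>i\<le>n. s i \<lhd> K"
    "\<forall>i<n. s i \<subset> s (Suc i) \<and> \<not> (\<exists>N. N \<lhd> K \<and> s i \<subset> N \<and> N \<subset> s (Suc i))"
    "\<forall>i<n. covers K U (s (Suc i)) (s i) \<or> covers K V (s (Suc i)) (s i)"
    using chain unfolding covered_chief_chain_def by (elim exE conjE) (rule that; assumption)
  define s' where "s' = s(Suc n := N)"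
  have "s' 0 = {\<one>\<^bsub>K\<^esub>}" "s' (Suc n) = N" "\<forall>i\<le>Suc n. s' i \<lhd> K"
    using s N by (auto simp: s'_def le_Suc_eq)
  moreover have "\<forall>i<Suc n. s' i \<subset> s' (Suc i) \<and> \<not> (\<exists>N. N \<lhd> K \<and> s' i \<subset> N \<and> N \<subset> s' (Suc i))"
    using s(2,4) N(2) chief by (simp add: s'_def less_Suc_eq)
  moreover have "\<forall>i<Suc n. covers K U (s' (Suc i)) (s' i) \<or> covers K V (s' (Suc i)) (s' i)"
    using s(2,5) cov by (simp add: s'_def less_Suc_eq)
  ultimately show ?thesis
    unfolding covered_chief_chain_def by (intro exI[of _ "Suc n"] exI[of _ s'] conjI)
qed

lemma (in group) exists_chief_factor_above:
  assumes fin: "finite (carrier G)" and W: "W \<lhd> G" and Y: "Y \<lhd> G" and WY: "W \<subset> Y"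
  obtains N where "N \<lhd> G" "W \<subset> N" "N \<subseteq> Y" "\<not> (\<exists>N'. N' \<lhd> G \<and> W \<subset> N' \<and> N' \<subset> N)"
proof -
  define between where "between N \<longleftrightarrow> N \<lhd> G \<and> W \<subset> N \<and> N \<subseteq> Y" for N
  have "between Y" using Y WY by (simp add: between_def)
  then obtain N where N: "between N" and least: "\<And>N'. between N' \<Longrightarrow> card N \<le> card N'"
    using ex_has_least_nat[of between Y card] by blast
  have "\<not> (\<exists>N'. N' \<lhd> G \<and> W \<subset> N' \<and> N' \<subset> N)"
  proof
    assume "\<exists>N'. N' \<lhd> G \<and> W \<subset> N' \<and> N' \<subset> N"
    then obtain N' where N': "N' \<lhd> G" "W \<subset> N'" "N' \<subset> N" by blast
    have "finite N" using N fin normal_imp_subgroup subgroup.subset finite_subset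
      unfolding between_def by metis
    then have "card N' < card N" using N'(3) by (rule psubset_card_mono)
    moreover have "between N'" using N N' unfolding between_def by blast
    ultimately show False using least by fastforce
  qed
  then show thesis using N that unfolding between_def by blast
qed

lemma (in group) covered_chief_chain_extend:
  assumes fin: "finite (carrier G)"
    and cov: "\<And>M M'. M \<lhd> G \<Longrightarrow> M' \<lhd> G \<Longrightarrow> W \<subseteq> M \<Longrightarrow> M \<subseteq> M' \<Longrightarrow> M' \<subseteq> Y \<Longrightarrow>
      covers G U M' M \<or> covers G V M' M"
  shows "covered_chief_chain G U V W \<Longrightarrow> W \<lhd> G \<Longrightarrow> Y \<lhd> G \<Longrightarrow> W \<subseteq> Y \<Longrightarrow>
    covered_chief_chain G U V Y"
  using cov
proof (induction "card Y - card W" arbitrary: W rule: less_induct)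
  case less
  show ?case
  proof (cases "W = Y")
    case True
    then show ?thesis using less.prems by simp
  next
    case False
    then obtain N where N: "N \<lhd> G" "W \<subset> N" "N \<subseteq> Y"
      and chief: "\<not> (\<exists>N'. N' \<lhd> G \<and> W \<subset> N' \<and> N' \<subset> N)"
      using exists_chief_factor_above[OF fin less.prems(2,3)] less.prems(4) by blast
    have chain_N: "covered_chief_chain G U V N"
      using covered_chief_chain_snoc[OF less.prems(1) N(1,2) chief] less.prems(2,5) N by blast
    have "finite Y" using fin less.prems(3) normal_imp_subgroup subgroup.subset finite_subset by metis
    then have "card W < card N" "card N \<le> card Y"
      using N by (auto intro: psubset_card_mono card_mono finite_subset)
    then have "card Y - card N < card Y - card W" by linarith
    then show ?thesis
      using less.hyps[OF _ chain_N N(1) less.prems(3) N(3)] less.prems(5) N(2) by blast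
  qed
qed

lemma (in group) hall_covered_chief_chain:
  assumes fin: "finite (carrier G)" and hall: "hall_subgroup \<pi> G H"
    and A: "subgroup A G" and hall_A: "hall_subgroup \<pi> (G\<lparr>carrier := A\<rparr>) (H \<inter> A)"
    and B: "subgroup B G" and hall_B: "hall_subgroup \<pi> (G\<lparr>carrier := B\<rparr>) (H \<inter> B)"
  shows "s 0 = {\<one>} \<Longrightarrow> (\<And>i. i \<le> n \<Longrightarrow> s i \<lhd> G) \<Longrightarrow> (\<And>i. i < n \<Longrightarrow> s i \<subseteq> s (Suc i)) \<Longrightarrow>
    (\<And>i. i < n \<Longrightarrow> covers G A (s (Suc i)) (s i) \<or> covers G B (s (Suc i)) (s i)) \<Longrightarrow>
    covered_chief_chain (G\<lparr>carrier := H\<rparr>) (H \<inter> A) (H \<inter> B) (H \<inter> s n)"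
proof (induction n)
  have H: "subgroup H G" using hall unfolding hall_subgroup_def by blast
  interpret GH: group "G\<lparr>carrier := H\<rparr>" using H by (rule subgroup_imp_group)
  have normal_H: "H \<inter> N \<lhd> G\<lparr>carrier := H\<rparr>" if "N \<lhd> G" for N
    using normal_Int_subgroup[OF H that] by (simp add: Int_commute)
  {
    case 0
    then have "H \<inter> s 0 = {\<one>\<^bsub>G\<lparr>carrier := H\<rparr>\<^esub>}" using subgroup.one_closed[OF H] by auto
    then show ?case using covered_chief_chain_trivial[OF GH.is_group] by simp
  next
    case (Suc n)
    have chain: "covered_chief_chain (G\<lparr>carrier := H\<rparr>) (H \<inter> A) (H \<inter> B) (H \<inter> s n)"
      using Suc by simp
    have P: "s n \<lhd> G" and Q: "s (Suc n) \<lhd> G" and PQ: "s n \<subseteq> s (Suc n)" using Suc.prems by auto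
    have cov_H: "covers G (H \<inter> A) (H \<inter> s (Suc n)) (H \<inter> s n) \<or>
        covers G (H \<inter> B) (H \<inter> s (Suc n)) (H \<inter> s n)"
      using Suc.prems(4)[of n] hall_Int_covers[OF fin hall A hall_A P Q PQ]
        hall_Int_covers[OF fin hall B hall_B P Q PQ] by blast
    have "covers (G\<lparr>carrier := H\<rparr>) (H \<inter> A) M' M \<or> covers (G\<lparr>carrier := H\<rparr>) (H \<inter> B) M' M"
      if "M \<lhd> G\<lparr>carrier := H\<rparr>" "M' \<lhd> G\<lparr>carrier := H\<rparr>"
        "H \<inter> s n \<subseteq> M" "M \<subseteq> M'" "M' \<subseteq> H \<inter> s (Suc n)" for M M'
    proof -
      have M': "subgroup M' G" using incl_subgroup[OF H normal_imp_subgroup[OF that(2)]] .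
      have "H \<inter> A \<subseteq> carrier G" "H \<inter> B \<subseteq> carrier G" using subgroup.subset[OF H] by auto
      then show ?thesis
        using cov_H covers_subsection[OF _ M' that(3-5)] unfolding covers_carrier_update by blast
    qed
    moreover have "finite (carrier (G\<lparr>carrier := H\<rparr>))" using finite_subset[OF subgroup.subset[OF H] fin] by simp
    moreover have "H \<inter> s n \<subseteq> H \<inter> s (Suc n)" using PQ by blast
    ultimately show ?case
      using GH.covered_chief_chain_extend[OF _ _ chain normal_H[OF P] normal_H[OF Q]] by blast
  }
qed

theorem mainTheorem2:
  fixes G :: "('a, 'b) monoid_scheme" and \<pi> :: "nat set" and A B H :: "'a set"
  assumes "group G" and "finite (carrier G)"
    and "\<forall>p\<in>\<pi>. Factorial_Ring.prime p"
    and "pi_separable \<pi> G"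
    and "subgroup A G" and "subgroup B G" and "A <#>\<^bsub>G\<^esub> B = carrier G"
    and "core_factorisation G A B"
    and "hall_subgroup \<pi> G H"
    and "H = (H \<inter> A) <#>\<^bsub>G\<^esub> (H \<inter> B)"
    and "hall_subgroup \<pi> (G\<lparr>carrier := A\<rparr>) (H \<inter> A)"
    and "hall_subgroup \<pi> (G\<lparr>carrier := B\<rparr>) (H \<inter> B)"
    and "H \<noteq> {\<one>\<^bsub>G\<^esub>}"
  shows "core_factorisation (G\<lparr>carrier := H\<rparr>) (H \<inter> A) (H \<inter> B)"
proof -
  interpret group G by (rule assms(1))
  have H: "subgroup H G" using assms(9) unfolding hall_subgroup_def by blast
  obtain n s where series: "chief_series G n s"
    and cov: "\<forall>i<n. covers G A (s (Suc i)) (s i) \<or> covers G B (s (Suc i)) (s i)"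
    using assms(8) unfolding core_factorisation_def by blast
  have s0: "s 0 = {\<one>\<^bsub>G\<^esub>}" and sn: "s n = carrier G" and normal_s: "\<And>i. i \<le> n \<Longrightarrow> s i \<lhd> G"
    and mono_s: "\<And>i. i < n \<Longrightarrow> s i \<subseteq> s (Suc i)"
    using series unfolding chief_series_def by auto
  have "covered_chief_chain (G\<lparr>carrier := H\<rparr>) (H \<inter> A) (H \<inter> B) (H \<inter> s n)"
    using hall_covered_chief_chain[OF assms(2,9,5,11,6,12) s0 normal_s mono_s] cov by blast
  moreover have "H \<inter> s n = H" using sn subgroup.subset[OF H] by blast
  ultimately have "covered_chief_chain (G\<lparr>carrier := H\<rparr>) (H \<inter> A) (H \<inter> B) (carrier (G\<lparr>carrier := H\<rparr>))"
    by simp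
  moreover have "subgroup (H \<inter> A) (G\<lparr>carrier := H\<rparr>)" "subgroup (H \<inter> B) (G\<lparr>carrier := H\<rparr>)"
    using subgroup_incl[OF subgroups_Inter_pair H] H assms(5,6) by auto
  ultimately show ?thesis
    using assms(10,13) unfolding core_factorisation_def covered_chief_chain_carrier_iff
    by (simp add: set_mult_carrier_update)
qed

end
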